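(* For every integer $n\geq 2$, the path $P_n$ on $n$ vertices satisfies $\operatorname{th}_{\operatorname{H}}(P_n)=\lceil 2\sqrt{n-1}\rceil$.
   Context: All graphs are finite, simple and undirected. Hopping color change rule: a blue vertex $v$ may force a white vertex $w$ to become blue if $v$ has not previously performed a force and every neighbor of $v$ is blue. For an initial blue set $B$, a chronological list of forces of $B$ is a sequence of such forces applied one at a time until no further force is possible; its underlying unordered set is a set of forces of $B$. $B$ is a hopping forcing set if some chronological list of forces of $B$ turns all vertices blue. For a set of forces $\mathcal F$ of $B$, let $\mathcal F^{(0)}=B$ and for $t\geq1$ let $\mathcal F^{(t)}$ be the set of vertices $w\notin U_{t-1}:=\bigcup_{i=0}^{t-1}\mathcal F^{(i)}$ for which there is $(v\to w)\in\mathcal F$ with $v\in U_{t-1}$ and all neighbors of $v$ in $U_{t-1}$. $\operatorname{pt}_{\operatorname{H}}(G;\mathcal F)$ is the least $t$ with $\bigcup_{i=0}^t\mathcal F^{(i)}=V(G)$ ($\infty$ if none); $\operatorname{pt}_{\operatorname{H}}(G;B)$ is the minimum of $\operatorname{pt}_{\operatorname{H}}(G;\mathcal F)$ over sets of forces $\mathcal F$ of $B$ ($\infty$ if $B$ is not a hopping forcing set). $\operatorname{th}_{\operatorname{H}}(G)=\min_{B\subseteq V(G)}\big(|B|+\operatorname{pt}_{\operatorname{H}}(G;B)\big)$. *)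

theory Defs
  imports Complex_Main "HOL-Library.Extended_Nat"
begin

text \<open>A finite simple graph is given by a vertex set V and a symmetric irreflexive
  adjacency relation E.  A force is a pair (v, w) meaning v forces w.\<close>

definition blue_after :: "'a set \<Rightarrow> ('a \<times> 'a) list \<Rightarrow> 'a set" where
  "blue_after B fs = B \<union> snd ` set fs"

definition can_hop_force ::
  "'a set \<Rightarrow> ('a \<Rightarrow> 'a \<Rightarrow> bool) \<Rightarrow> 'a set \<Rightarrow> ('a \<times> 'a) list \<Rightarrow> 'a \<Rightarrow> 'a \<Rightarrow> bool" where
  "can_hop_force V E B fs v w \<longleftrightarrow>
     v \<in> blue_after B fs \<and> w \<in> V \<and> w \<notin> blue_after B fs \<and> v \<notin> fst ` set fs \<and>
     (\<forall>u\<in>V. E v u \<longrightarrow> u \<in> blue_after B fs)"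

definition chrono_list ::
  "'a set \<Rightarrow> ('a \<Rightarrow> 'a \<Rightarrow> bool) \<Rightarrow> 'a set \<Rightarrow> ('a \<times> 'a) list \<Rightarrow> bool" where
  "chrono_list V E B fs \<longleftrightarrow>
     (\<forall>i<length fs. can_hop_force V E B (take i fs) (fst (fs ! i)) (snd (fs ! i))) \<and>
     \<not> (\<exists>v w. can_hop_force V E B fs v w)"

definition set_of_forces ::
  "'a set \<Rightarrow> ('a \<Rightarrow> 'a \<Rightarrow> bool) \<Rightarrow> 'a set \<Rightarrow> ('a \<times> 'a) set \<Rightarrow> bool" where
  "set_of_forces V E B F \<longleftrightarrow> (\<exists>fs. chrono_list V E B fs \<and> F = set fs)"

definition hopping_forcing_set :: "'a set \<Rightarrow> ('a \<Rightarrow> 'a \<Rightarrow> bool) \<Rightarrow> 'a set \<Rightarrow> bool" where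
  "hopping_forcing_set V E B \<longleftrightarrow> B \<subseteq> V \<and> (\<exists>fs. chrono_list V E B fs \<and> blue_after B fs = V)"

fun hop_rounds ::
  "'a set \<Rightarrow> ('a \<Rightarrow> 'a \<Rightarrow> bool) \<Rightarrow> 'a set \<Rightarrow> ('a \<times> 'a) set \<Rightarrow> nat \<Rightarrow> 'a set" where
  "hop_rounds V E B F 0 = B"
| "hop_rounds V E B F (Suc t) =
     hop_rounds V E B F t \<union>
     {w. w \<notin> hop_rounds V E B F t \<and>
         (\<exists>v. (v, w) \<in> F \<and> v \<in> hop_rounds V E B F t \<and>
              (\<forall>u\<in>V. E v u \<longrightarrow> u \<in> hop_rounds V E B F t))}"

definition pt_H_forces ::
  "'a set \<Rightarrow> ('a \<Rightarrow> 'a \<Rightarrow> bool) \<Rightarrow> 'a set \<Rightarrow> ('a \<times> 'a) set \<Rightarrow> enat" where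
  "pt_H_forces V E B F =
     (if \<exists>t. hop_rounds V E B F t = V then enat (LEAST t. hop_rounds V E B F t = V) else \<infinity>)"

definition pt_H :: "'a set \<Rightarrow> ('a \<Rightarrow> 'a \<Rightarrow> bool) \<Rightarrow> 'a set \<Rightarrow> enat" where
  "pt_H V E B =
     (if hopping_forcing_set V E B
      then Inf {pt_H_forces V E B F | F. set_of_forces V E B F}
      else \<infinity>)"

definition th_H :: "'a set \<Rightarrow> ('a \<Rightarrow> 'a \<Rightarrow> bool) \<Rightarrow> enat" where
  "th_H V E = Inf {enat (card B) + pt_H V E B | B. B \<subseteq> V}"

definition path_vertices :: "nat \<Rightarrow> nat set" where
  "path_vertices n = {0..<n}"

definition path_edge :: "nat \<Rightarrow> nat \<Rightarrow> bool" where
  "path_edge u v \<longleftrightarrow> u + 1 = v \<or> v + 1 = u"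

end

theory Submission
  imports Defs
begin

text \<open>In round t+1 only vertices whose whole closed neighbourhood is already blue can force,
  and each of them forces at most one vertex. In a connected graph some vertex of a nonempty
  proper blue set has a white neighbour, so the number of blue vertices grows by at most
  |B| - 1 per round, giving n + t \<le> |B| (t + 1) and hence 4(n - 1) \<le> (|B| + t)^2. On the path
  this is attained: starting from b consecutive blue vertices and letting each v force v + b,
  every round colours b - 1 new vertices.\<close>

lemma chrono_list_forceI:
  assumes "chrono_list V E B fs" "i < length fs"
  shows "can_hop_force V E B (take i fs) (fst (fs ! i)) (snd (fs ! i))"
  using assms unfolding chrono_list_def by blast

lemma set_of_forces_targets:
  assumes "set_of_forces V E B F" "(v, w) \<in> F"
  shows "w \<in> V"
proof -
  obtain fs where fs: "chrono_list V E B fs" "F = set fs"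
    using assms(1) unfolding set_of_forces_def by blast
  then obtain i where "i < length fs" "fs ! i = (v, w)"
    using assms(2) by (metis in_set_conv_nth)
  with chrono_list_forceI[OF fs(1)] show ?thesis
    unfolding can_hop_force_def by fastforce
qed

lemma chrono_list_distinct_forcers:
  assumes "chrono_list V E B fs"
  shows "distinct (map fst fs)"
proof -
  have "distinct (map fst (take k fs))" if "k \<le> length fs" for k
    using that
  proof (induction k)
    case (Suc k)
    then have "fst (fs ! k) \<notin> fst ` set (take k fs)"
      using chrono_list_forceI[OF assms, of k] unfolding can_hop_force_def by simp
    with Suc show ?case by (simp add: take_Suc_conv_app_nth)
  qed simp
  from this[of "length fs"] show ?thesis by simp
qed

lemma set_of_forces_single_valued:
  assumes "set_of_forces V E B F"
  shows "single_valued F"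
proof -
  obtain fs where fs: "chrono_list V E B fs" "F = set fs"
    using assms unfolding set_of_forces_def by blast
  then have "inj_on fst F"
    using chrono_list_distinct_forcers distinct_map by blast
  then show ?thesis
    unfolding single_valued_def inj_on_def by (metis fst_conv prod.inject)
qed

lemma Image_subset_image_the:
  assumes "single_valued F"
  shows "F `` A \<subseteq> (\<lambda>v. THE w. (v, w) \<in> F) ` A"
proof
  fix w assume "w \<in> F `` A"
  then obtain v where v: "v \<in> A" "(v, w) \<in> F" by blast
  have "(THE w. (v, w) \<in> F) = w"
    using v(2) by (rule the_equality) (use assms v(2) in \<open>blast dest: single_valuedD\<close>)
  with v show "w \<in> (\<lambda>v. THE w. (v, w) \<in> F) ` A" by blast
qed

lemma finite_Image_single_valued: "single_valued F \<Longrightarrow> finite A \<Longrightarrow> finite (F `` A)"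
  by (rule finite_subset[OF Image_subset_image_the finite_imageI])

lemma card_Image_le:
  assumes "single_valued F" "finite A"
  shows "card (F `` A) \<le> card A"
  using card_mono[OF finite_imageI[OF assms(2)] Image_subset_image_the[OF assms(1)]]
    card_image_le[OF assms(2), of "\<lambda>v. THE w. (v, w) \<in> F"] by linarith

definition interior_vertices :: "'a set \<Rightarrow> ('a \<Rightarrow> 'a \<Rightarrow> bool) \<Rightarrow> 'a set \<Rightarrow> 'a set" where
  "interior_vertices V E U = {v \<in> U. \<forall>u\<in>V. E v u \<longrightarrow> u \<in> U}"

lemma interior_vertices_subset: "interior_vertices V E U \<subseteq> U"
  unfolding interior_vertices_def by blast

lemma interior_vertices_mono: "U \<subseteq> U' \<Longrightarrow> interior_vertices V E U \<subseteq> interior_vertices V E U'"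
  unfolding interior_vertices_def by blast

lemma interior_vertices_empty [simp]: "interior_vertices V E {} = {}"
  unfolding interior_vertices_def by blast

lemma hop_rounds_Suc_eq:
  "hop_rounds V E B F (Suc t) =
     hop_rounds V E B F t \<union> F `` interior_vertices V E (hop_rounds V E B F t)"
  unfolding interior_vertices_def by auto

lemma hop_rounds_mono: "s \<le> t \<Longrightarrow> hop_rounds V E B F s \<subseteq> hop_rounds V E B F t"
  by (induction t) (auto simp: le_Suc_eq)

lemma hop_rounds_subset:
  assumes "B \<subseteq> V" "set_of_forces V E B F"
  shows "hop_rounds V E B F t \<subseteq> V"
proof (induction t)
  case 0
  show ?case using assms(1) by simp
next
  case (Suc t)
  moreover have "F `` X \<subseteq> V" for X
    using set_of_forces_targets[OF assms(2)] by blast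
  ultimately show ?case by (simp only: hop_rounds_Suc_eq Un_subset_iff)
qed

lemma hop_rounds_Suc_subset:
  "hop_rounds V E B F (Suc t) \<subseteq> B \<union> F `` interior_vertices V E (hop_rounds V E B F t)"
proof (induction t)
  case 0
  show ?case by (simp only: hop_rounds_Suc_eq) auto
next
  case (Suc t)
  have "interior_vertices V E (hop_rounds V E B F t)
          \<subseteq> interior_vertices V E (hop_rounds V E B F (Suc t))"
    by (rule interior_vertices_mono) auto
  with Suc.IH show ?case
    by (subst hop_rounds_Suc_eq) blast
qed

lemma card_hop_rounds_Suc_le:
  assumes "finite V" "B \<subseteq> V" "set_of_forces V E B F"
  shows "card (hop_rounds V E B F (Suc t))
           \<le> card B + card (interior_vertices V E (hop_rounds V E B F t))"
proof -
  let ?I = "interior_vertices V E (hop_rounds V E B F t)"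
  have fin_I: "finite ?I"
    using hop_rounds_subset[OF assms(2,3)] interior_vertices_subset assms(1)
    by (meson finite_subset)
  have sv: "single_valued F" using assms(3) by (rule set_of_forces_single_valued)
  have "finite (B \<union> F `` ?I)"
    using finite_subset[OF assms(2,1)] finite_Image_single_valued[OF sv fin_I] by blast
  then have "card (hop_rounds V E B F (Suc t)) \<le> card (B \<union> F `` ?I)"
    using hop_rounds_Suc_subset by (rule card_mono)
  also have "\<dots> \<le> card B + card (F `` ?I)" by (rule card_Un_le)
  also have "\<dots> \<le> card B + card ?I" using card_Image_le[OF sv fin_I] by simp
  finally show ?thesis .
qed

text \<open>The hypothesis \<open>connected\<close> expresses connectivity of the graph: no nonempty proper
  vertex set is closed under taking neighbours.\<close>

lemma card_hop_rounds_add_le: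
  assumes "finite V" "B \<subseteq> V" "B \<noteq> {}" "set_of_forces V E B F"
    and connected: "\<And>U. U \<subseteq> V \<Longrightarrow> U \<noteq> {} \<Longrightarrow> U \<noteq> V \<Longrightarrow> interior_vertices V E U \<noteq> U"
    and "\<forall>s<t. hop_rounds V E B F s \<noteq> V"
  shows "card (hop_rounds V E B F t) + t \<le> card B * (t + 1)"
  using assms(6)
proof (induction t)
  case 0
  then show ?case by simp
next
  case (Suc t)
  let ?U = "hop_rounds V E B F t"
  have U_sub: "?U \<subseteq> V" using assms(2,4) by (rule hop_rounds_subset)
  have "B \<subseteq> ?U" using hop_rounds_mono[of 0 t] by simp
  with assms(3) have "?U \<noteq> {}" by blast
  moreover have "?U \<noteq> V" using Suc.prems by simp
  ultimately have "interior_vertices V E ?U \<noteq> ?U" by (rule connected[OF U_sub])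
  then have "interior_vertices V E ?U \<subset> ?U" by (rule psubsetI[OF interior_vertices_subset])
  then have "card (interior_vertices V E ?U) < card ?U"
    using finite_subset[OF U_sub assms(1)] by (rule psubset_card_mono[rotated])
  moreover have "card ?U + t \<le> card B * (t + 1)" using Suc by simp
  moreover have "card B * (Suc t + 1) = card B + card B * (t + 1)" by simp
  ultimately show ?case
    using card_hop_rounds_Suc_le[OF assms(1,2,4), of t] by linarith
qed

lemma pt_H_attained:
  assumes "pt_H V E B = enat t"
  obtains F where "set_of_forces V E B F" "pt_H_forces V E B F = enat t"
proof -
  let ?S = "{pt_H_forces V E B F | F. set_of_forces V E B F}"
  have "?S \<noteq> {}" and Inf: "Inf ?S = enat t"
    using assms unfolding pt_H_def Inf_enat_def by (auto split: if_splits)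
  then obtain x where "x \<in> ?S" by blast
  then have "Inf ?S \<in> ?S" by (rule wellorder_InfI)
  then obtain F where "set_of_forces V E B F" "pt_H_forces V E B F = Inf ?S" by auto
  with Inf show ?thesis by (intro that) auto
qed

lemma pt_H_forces_eq_enatD:
  assumes "pt_H_forces V E B F = enat t"
  shows "hop_rounds V E B F t = V" "\<forall>s<t. hop_rounds V E B F s \<noteq> V"
proof -
  have ex: "\<exists>t. hop_rounds V E B F t = V" and t: "t = (LEAST t. hop_rounds V E B F t = V)"
    using assms unfolding pt_H_forces_def by (auto split: if_splits)
  show "hop_rounds V E B F t = V" unfolding t using ex by (rule LeastI_ex)
  show "\<forall>s<t. hop_rounds V E B F s \<noteq> V" unfolding t using not_less_Least by blast
qed

lemma pt_H_lower_bound: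
  assumes "finite V" "V \<noteq> {}" "B \<subseteq> V" "pt_H V E B = enat t"
    and connected: "\<And>U. U \<subseteq> V \<Longrightarrow> U \<noteq> {} \<Longrightarrow> U \<noteq> V \<Longrightarrow> interior_vertices V E U \<noteq> U"
  shows "card V + t \<le> card B * (t + 1)"
proof -
  obtain F where F: "set_of_forces V E B F" "pt_H_forces V E B F = enat t"
    using assms(4) by (rule pt_H_attained)
  note rounds = pt_H_forces_eq_enatD[OF F(2)]
  have "B \<noteq> {}"
  proof
    assume "B = {}"
    then have "hop_rounds V E B F s = {}" for s
      using hop_rounds_Suc_subset[of V E B F] by (induction s) auto
    with rounds(1) assms(2) show False by simp
  qed
  with card_hop_rounds_add_le[OF assms(1,3) _ F(1) connected rounds(2)] rounds(1) show ?thesis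
    by simp
qed

lemma th_H_geI:
  assumes "\<And>B t. B \<subseteq> V \<Longrightarrow> pt_H V E B = enat t \<Longrightarrow> k \<le> card B + t"
  shows "enat k \<le> th_H V E"
  unfolding th_H_def
proof (rule Inf_greatest, clarify)
  fix B assume "B \<subseteq> V"
  with assms show "enat k \<le> enat (card B) + pt_H V E B"
    by (cases "pt_H V E B") auto
qed

lemma th_H_le: "B \<subseteq> V \<Longrightarrow> th_H V E \<le> enat (card B) + pt_H V E B"
  unfolding th_H_def by (blast intro: Inf_lower)

lemma pt_H_le_of_chrono_list:
  assumes "B \<subseteq> V" "chrono_list V E B fs" "hop_rounds V E B (set fs) t = V"
  shows "pt_H V E B \<le> enat t"
proof -
  have forces: "set_of_forces V E B (set fs)"
    using assms(2) unfolding set_of_forces_def by blast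
  have "hop_rounds V E B (set fs) t \<subseteq> blue_after B fs"
    unfolding blue_after_def by (induction t) force+
  moreover have "blue_after B fs \<subseteq> V"
    using assms(1) set_of_forces_targets[OF forces] unfolding blue_after_def by force
  ultimately have "hopping_forcing_set V E B"
    using assms unfolding hopping_forcing_set_def by blast
  then have "pt_H V E B \<le> pt_H_forces V E B (set fs)"
    unfolding pt_H_def using forces by (auto intro: Inf_lower)
  also have "\<dots> \<le> enat t"
    unfolding pt_H_forces_def using assms(3) by (auto intro: Least_le)
  finally show ?thesis .
qed

lemma th_H_le_card:
  assumes "finite V"
  shows "th_H V E \<le> enat (card V)"
proof -
  have "chrono_list V E V []"
    unfolding chrono_list_def can_hop_force_def blue_after_def by simp
  then have "pt_H V E V \<le> enat 0" by (intro pt_H_le_of_chrono_list) auto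
  with th_H_le[of V V E] show ?thesis by (simp add: enat_0)
qed

lemma path_edge_closed_subset_eq:
  assumes "U \<subseteq> {0..<n}" "a \<in> U" "interior_vertices {0..<n} path_edge U = U"
  shows "U = {0..<n}"
proof -
  have closed: "u \<in> U" if "v \<in> U" "path_edge v u" "u < n" for u v
  proof -
    have "v \<in> interior_vertices {0..<n} path_edge U" using that(1) assms(3) by simp
    with that(2,3) show ?thesis unfolding interior_vertices_def by simp
  qed
  have up: "a + d < n \<Longrightarrow> a + d \<in> U" for d
    by (induction d) (use assms(2) closed[of "a + _"] in \<open>auto simp: path_edge_def\<close>)
  have down: "a - d \<in> U" for d
  proof (induction d)
    case (Suc d)
    have "a - d < n" using Suc assms(1) by auto
    then have "a - Suc d < n" by linarith
    with Suc closed[of "a - d" "a - Suc d"] show ?case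
      by (cases "d < a") (simp_all add: path_edge_def Suc_diff_Suc)
  qed (simp add: assms(2))
  have "i \<in> U" if "i < n" for i
    using up[of "i - a"] down[of "a - i"] that by (cases "a \<le> i") auto
  with assms(1) show ?thesis by auto
qed

lemma path_edge_connected:
  "U \<subseteq> {0..<n} \<Longrightarrow> U \<noteq> {} \<Longrightarrow> U \<noteq> {0..<n} \<Longrightarrow> interior_vertices {0..<n} path_edge U \<noteq> U"
  using path_edge_closed_subset_eq by blast

text \<open>With the b leftmost vertices blue, the i-th force v = i \<rightarrow> i + b is legal because at
  that moment the blue vertices are 0, ..., b + i - 1, which contain v + 1 as b \<ge> 2.\<close>

definition shift_forces :: "nat \<Rightarrow> nat \<Rightarrow> (nat \<times> nat) list" where
  "shift_forces n b = map (\<lambda>v. (v, v + b)) [0..<n - b]"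

lemma set_take_shift_forces:
  "i \<le> n - b \<Longrightarrow> set (take i (shift_forces n b)) = (\<lambda>v. (v, v + b)) ` {0..<i}"
  unfolding shift_forces_def by (simp add: take_map min_def)

lemma blue_after_shift_forces:
  assumes "i \<le> n - b"
  shows "blue_after {0..<b} (take i (shift_forces n b)) = {0..<b + i}"
proof -
  have "snd ` set (take i (shift_forces n b)) = {b..<b + i}"
    using assms by (simp add: set_take_shift_forces image_image add.commute)
  then show ?thesis unfolding blue_after_def by auto
qed

lemma chrono_list_shift_forces:
  assumes "2 \<le> b" "b \<le> n"
  shows "chrono_list {0..<n} path_edge {0..<b} (shift_forces n b)"
  unfolding chrono_list_def
proof (intro conjI allI impI)
  fix i assume "i < length (shift_forces n b)"
  then have i: "i < n - b" by (simp add: shift_forces_def)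
  have "fst ` set (take i (shift_forces n b)) = {0..<i}"
    using i by (simp add: set_take_shift_forces image_image)
  with i assms blue_after_shift_forces[of i n b]
  show "can_hop_force {0..<n} path_edge {0..<b} (take i (shift_forces n b))
          (fst (shift_forces n b ! i)) (snd (shift_forces n b ! i))"
    unfolding can_hop_force_def path_edge_def by (auto simp: shift_forces_def)
next
  have "blue_after {0..<b} (shift_forces n b) = {0..<n}"
    using blue_after_shift_forces[of "n - b" n b] assms by (simp add: shift_forces_def)
  then show "\<not> (\<exists>v w. can_hop_force {0..<n} path_edge {0..<b} (shift_forces n b) v w)"
    unfolding can_hop_force_def by auto
qed

lemma hop_rounds_shift_forces:
  "{0..<min n (b + s * (b - 1))} \<subseteq> hop_rounds {0..<n} path_edge {0..<b} (set (shift_forces n b)) s"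
proof (induction s)
  case 0
  show ?case by auto
next
  case (Suc s)
  let ?U = "hop_rounds {0..<n} path_edge {0..<b} (set (shift_forces n b)) s"
  let ?L = "min n (b + s * (b - 1))"
  show ?case
  proof
    fix w assume w: "w \<in> {0..<min n (b + Suc s * (b - 1))}"
    show "w \<in> hop_rounds {0..<n} path_edge {0..<b} (set (shift_forces n b)) (Suc s)"
    proof (cases "w < ?L")
      case True
      with Suc.IH have "w \<in> ?U" by auto
      then show ?thesis unfolding hop_rounds_Suc_eq by (rule UnI1)
    next
      case False
      with w have wL: "b + s * (b - 1) \<le> w" "w < n" "w < b + s * (b - 1) + (b - 1)" by auto
      define v where "v = w - b"
      have "(v, w) \<in> set (shift_forces n b)"
        using wL unfolding v_def shift_forces_def by auto
      moreover have "v \<in> interior_vertices {0..<n} path_edge ?U"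
        using Suc.IH wL unfolding interior_vertices_def path_edge_def v_def by auto
      ultimately show ?thesis
        unfolding hop_rounds_Suc_eq by (intro UnI2 ImageI)
    qed
  qed
qed

lemma th_H_path_le:
  assumes "2 \<le> b" "b \<le> n" "n \<le> b + t * (b - 1)"
  shows "th_H {0..<n} path_edge \<le> enat (b + t)"
proof -
  have "{0..<n} \<subseteq> hop_rounds {0..<n} path_edge {0..<b} (set (shift_forces n b)) t"
    using hop_rounds_shift_forces[of n b t] assms(3) by simp
  moreover have "hop_rounds {0..<n} path_edge {0..<b} (set (shift_forces n b)) t \<subseteq> {0..<n}"
    using assms(1,2) chrono_list_shift_forces[OF assms(1,2)]
    by (intro hop_rounds_subset) (auto simp: set_of_forces_def)
  ultimately have "pt_H {0..<n} path_edge {0..<b} \<le> enat t"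
    using assms(2) chrono_list_shift_forces[OF assms(1,2)] by (intro pt_H_le_of_chrono_list) auto
  have "th_H {0..<n} path_edge \<le> enat (card {0..<b}) + pt_H {0..<n} path_edge {0..<b}"
    using assms(2) by (intro th_H_le) auto
  also have "\<dots> \<le> enat b + enat t"
    using add_left_mono[OF \<open>pt_H {0..<n} path_edge {0..<b} \<le> enat t\<close>, of "enat b"] by simp
  finally show ?thesis by simp
qed

lemma nat_ceiling_two_sqrt_le_iff: "nat \<lceil>2 * sqrt (real m)\<rceil> \<le> k \<longleftrightarrow> 4 * m \<le> k\<^sup>2"
proof -
  have "nat \<lceil>2 * sqrt (real m)\<rceil> \<le> k \<longleftrightarrow> sqrt (4 * real m) \<le> real k"
    by (simp add: nat_le_iff ceiling_le_iff real_sqrt_mult)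
  also have "\<dots> \<longleftrightarrow> 4 * real m \<le> (real k)\<^sup>2"
    by (meson of_nat_0_le_iff real_le_lsqrt sqrt_le_D)
  also have "\<dots> \<longleftrightarrow> 4 * m \<le> k\<^sup>2"
    by (metis of_nat_le_iff of_nat_mult of_nat_numeral of_nat_power)
  finally show ?thesis .
qed

lemma four_mul_le_sq_of_le_mul:
  fixes n b t :: nat
  assumes "n + t \<le> b * (t + 1)"
  shows "4 * (n - 1) \<le> (b + t)\<^sup>2"
proof -
  have "int (4 * (b * (t + 1))) + (int b - int t - 2)\<^sup>2 = int ((b + t)\<^sup>2 + 4 * (t + 1))"
    by (simp add: algebra_simps power2_eq_square)
  moreover have "0 \<le> (int b - int t - 2)\<^sup>2" by simp
  ultimately have "4 * (b * (t + 1)) \<le> (b + t)\<^sup>2 + 4 * (t + 1)" by linarith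
  with assms show ?thesis by (cases n) simp_all
qed

lemma le_mul_of_four_mul_le_sq:
  fixes m k :: nat
  assumes "4 * m \<le> k\<^sup>2"
  shows "m \<le> (k div 2) * (k - k div 2)"
proof -
  define x where "x = k div 2"
  have "k = 2 * x \<or> k = 2 * x + 1" unfolding x_def by presburger
  then have "k\<^sup>2 \<le> 4 * (x * (k - x)) + 1"
  proof
    assume "k = 2 * x"
    then show ?thesis by (simp add: power2_eq_square)
  next
    assume "k = 2 * x + 1"
    then show ?thesis by (simp add: power2_eq_square algebra_simps)
  qed
  with assms show ?thesis unfolding x_def by linarith
qed

lemma th_H_path_lower:
  assumes "1 \<le> n"
  shows "enat (nat \<lceil>2 * sqrt (real (n - 1))\<rceil>) \<le> th_H {0..<n} path_edge"
proof (rule th_H_geI)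
  fix B t assume "B \<subseteq> {0..<n}" "pt_H {0..<n} path_edge B = enat t"
  then have "n + t \<le> card B * (t + 1)"
    using pt_H_lower_bound[OF _ _ _ _ path_edge_connected] assms by fastforce
  then show "nat \<lceil>2 * sqrt (real (n - 1))\<rceil> \<le> card B + t"
    unfolding nat_ceiling_two_sqrt_le_iff by (rule four_mul_le_sq_of_le_mul)
qed

lemma th_H_path_upper:
  assumes "2 \<le> n"
  shows "th_H {0..<n} path_edge \<le> enat (nat \<lceil>2 * sqrt (real (n - 1))\<rceil>)"
proof -
  define k where "k = nat \<lceil>2 * sqrt (real (n - 1))\<rceil>"
  define x where "x = k div 2"
  have "4 * (n - 1) \<le> k\<^sup>2" unfolding k_def by (simp flip: nat_ceiling_two_sqrt_le_iff)
  then have xk: "n - 1 \<le> x * (k - x)" unfolding x_def by (rule le_mul_of_four_mul_le_sq)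
  with assms have "0 < x * (k - x)" by linarith
  then have x: "0 < x" and "0 < k - x" by simp_all
  then obtain y where y: "k - x = Suc y" using gr0_implies_Suc by blast
  have k: "k = (x + 1) + y" using y by simp
  have "th_H {0..<n} path_edge \<le> enat k"
  proof (cases "x + 1 \<le> n")
    case True
    have "n \<le> (x + 1) + y * (x + 1 - 1)" using xk y by (simp add: mult.commute)
    with True x show ?thesis unfolding k by (intro th_H_path_le) auto
  next
    case False
    with th_H_le_card[of "{0..<n}" path_edge] have "th_H {0..<n} path_edge \<le> enat n" by simp
    also have "\<dots> \<le> enat k" using False k by simp
    finally show ?thesis .
  qed
  then show ?thesis unfolding k_def .
qed

theorem proposition3p5:
  fixes n :: nat
  assumes "n \<ge> 2"
  shows "th_H (path_vertices n) path_edge = enat (nat \<lceil>2 * sqrt (real (n - 1))\<rceil>)"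
  unfolding path_vertices_def
  using th_H_path_upper[OF assms] th_H_path_lower assms by (intro antisym) auto

end
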